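(* For every intuitionistic conditional nested sequent $\Gamma$: if $\Gamma$ is derivable in the nested calculus $\mathsf{N.IntCK}$, then its formula interpretation $i(\Gamma)$ is derivable in the Hilbert system $\mathsf{IntCK}$.
   Context: Language $\mathcal{L}$: formulas $\varphi ::= p \mid \bot \mid \varphi\wedge\varphi \mid \varphi\vee\varphi \mid \varphi\to\varphi \mid \varphi \mathrel{\Box\!\!\to} \varphi \mid \varphi \mathrel{\Diamond\!\!\to}\varphi$ ($p$ ranging over a countable set of atoms); $\neg\varphi:=\varphi\to\bot$, $\top:=\neg\bot$, $\varphi\leftrightarrow\psi := (\varphi\to\psi)\wedge(\psi\to\varphi)$. Hilbert system $\mathsf{IntCK}$: any axiomatisation of intuitionistic propositional logic in $\mathcal{L}$ with modus ponens, plus the rules RA$_\Box$: from $\varphi\leftrightarrow\rho$ infer $(\varphi\mathrel{\Box\!\!\to}\psi)\leftrightarrow(\rho\mathrel{\Box\!\!\to}\psi)$; RC$_\Box$: from $\psi\leftrightarrow\chi$ infer $(\varphi\mathrel{\Box\!\!\to}\psi)\leftrightarrow(\varphi\mathrel{\Box\!\!\to}\chi)$; RA$_\Diamond$, RC$_\Diamond$: the same with $\mathrel{\Diamond\!\!\to}$; and axioms CM$_\Box$: $(\varphi\mathrel{\Box\!\!\to}\psi\wedge\chi)\to(\varphi\mathrel{\Box\!\!\to}\psi)\wedge(\varphi\mathrel{\Box\!\!\to}\chi)$; CC$_\Box$: $(\varphi\mathrel{\Box\!\!\to}\psi)\wedge(\varphi\mathrel{\Box\!\!\to}\chi)\to(\varphi\mathrel{\Box\!\!\to}\psi\wedge\chi)$;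 CN$_\Box$: $\varphi\mathrel{\Box\!\!\to}\top$; CM$_\Diamond$: $(\varphi\mathrel{\Diamond\!\!\to}\psi)\vee(\varphi\mathrel{\Diamond\!\!\to}\chi)\to(\varphi\mathrel{\Diamond\!\!\to}\psi\vee\chi)$; CC$_\Diamond$: $(\varphi\mathrel{\Diamond\!\!\to}\psi\vee\chi)\to(\varphi\mathrel{\Diamond\!\!\to}\psi)\vee(\varphi\mathrel{\Diamond\!\!\to}\chi)$; CN$_\Diamond$: $\neg(\varphi\mathrel{\Diamond\!\!\to}\bot)$; CW: $(\varphi\mathrel{\Diamond\!\!\to}\psi)\wedge(\varphi\mathrel{\Box\!\!\to}\chi)\to(\varphi\mathrel{\Diamond\!\!\to}\psi\wedge\chi)$; CFS: $((\varphi\mathrel{\Diamond\!\!\to}\psi)\to(\varphi\mathrel{\Box\!\!\to}\chi))\to(\varphi\mathrel{\Box\!\!\to}(\psi\to\chi))$. Nested sequents: each formula $\varphi$ gets an input polarity $\varphi^\bullet$ or output polarity $\varphi^\circ$. Input sequents $\Lambda ::= \emptyset \mid \Lambda,\varphi^\bullet \mid \Lambda,[\psi:\Lambda]$ and nested sequents $\Gamma ::= \Lambda,\varphi^\circ \mid \Lambda,[\psi:\Gamma]$, where the index $\psi$ of a component $[\psi:\cdot]$ is an unpolarised formula; thus a nested sequent contains exactly one output formula (commas are treated as associative and commutative, as usual). Formula interpretation: $i(\emptyset)=\top$; $i(\Lambda,\varphi^\bullet)=i(\Lambda)\wedge\varphi$; $i(\Lambda,[\psi:\Lambda'])=i(\Lambda)\wedge(\psi\mathrel{\Diamond\!\!\to}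 i(\Lambda'))$; $i(\Lambda,\varphi^\circ)=i(\Lambda)\to\varphi$; $i(\Lambda,[\psi:\Gamma])=i(\Lambda)\to(\psi\mathrel{\Box\!\!\to} i(\Gamma))$. A context $\Gamma\{\ \}$ is a (nested or input) sequent with one hole $\{\ \}$ (possibly inside nested components), to be filled with a sequent; rules are applied only when premisses and conclusion are nested sequents. $\Gamma^{\downarrow}\{\ \}$ denotes $\Gamma\{\ \}$ with its output formula removed. Rules of $\mathsf{N.IntCK}$ (premisses / conclusion): init: $\Gamma\{p^\bullet,p^\circ\}$ (no premiss, $p$ atom); $\bot^\bullet$: $\Gamma\{\bot^\bullet\}$ (no premiss); $\wedge^\bullet$: $\Gamma\{\varphi^\bullet,\psi^\bullet\}$ / $\Gamma\{(\varphi\wedge\psi)^\bullet\}$; $\wedge^\circ$: $\Gamma\{\varphi^\circ\}$, $\Gamma\{\psi^\circ\}$ / $\Gamma\{(\varphi\wedge\psi)^\circ\}$; $\vee^\bullet$: $\Gamma\{\varphi^\bullet\}$, $\Gamma\{\psi^\bullet\}$ / $\Gamma\{(\varphi\vee\psi)^\bullet\}$; $\vee^\circ$: $\Gamma\{\varphi^\circ\}$ / $\Gamma\{(\varphi\vee\psi)^\circ\}$ and $\Gamma\{\psi^\circ\}$ / $\Gamma\{(\varphi\vee\psi)^\circ\}$; $\to^\bullet$: $\Gamma^\downarrow\{(\varphi\to\psi)^\bullet,\varphi^\circ\}$, $\Gamma\{\psi^\bullet\}$ / $\Gamma\{(\varphi\to\psi)^\bullet\}$; $\to^\circ$: $\Gamma\{\varphi^\bullet,\psi^\circ\}$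 / $\Gamma\{(\varphi\to\psi)^\circ\}$; $\Box^\bullet$: $\varphi^\bullet,\eta^\circ$ and $\eta^\bullet,\varphi^\circ$ and $\Gamma\{(\varphi\mathrel{\Box\!\!\to}\psi)^\bullet,[\eta:\psi^\bullet,\Delta]\}$ / $\Gamma\{(\varphi\mathrel{\Box\!\!\to}\psi)^\bullet,[\eta:\Delta]\}$; $\Box^\circ$: $\Gamma\{[\varphi:\psi^\circ]\}$ / $\Gamma\{(\varphi\mathrel{\Box\!\!\to}\psi)^\circ\}$; $\Diamond^\bullet$: $\Gamma\{[\varphi:\psi^\bullet]\}$ / $\Gamma\{(\varphi\mathrel{\Diamond\!\!\to}\psi)^\bullet\}$; $\Diamond^\circ$: $\varphi^\bullet,\eta^\circ$ and $\eta^\bullet,\varphi^\circ$ and $\Gamma\{[\eta:\psi^\circ,\Delta]\}$ / $\Gamma\{(\varphi\mathrel{\Diamond\!\!\to}\psi)^\circ,[\eta:\Delta]\}$. A derivation is a finite tree of rule instances whose leaves are instances of init or $\bot^\bullet$. *)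

theory Defs
  imports Main "HOL-Library.Multiset"
begin

datatype form =
    Atom nat
  | Bot
  | And form form
  | Or form form
  | Imp form form
  | CBox form form
  | CDia form form

definition Neg :: "form \<Rightarrow> form" where "Neg \<phi> = Imp \<phi> Bot"
definition Top :: form where "Top = Neg Bot"
definition Iff :: "form \<Rightarrow> form \<Rightarrow> form" where
  "Iff \<phi> \<psi> = And (Imp \<phi> \<psi>) (Imp \<psi> \<phi>)"

inductive IntCK :: "form \<Rightarrow> bool" where
  ax_K:   "IntCK (Imp A (Imp B A))"
| ax_S:   "IntCK (Imp (Imp A (Imp B C)) (Imp (Imp A B) (Imp A C)))"
| ax_AndE1: "IntCK (Imp (And A B) A)"
| ax_AndE2: "IntCK (Imp (And A B) B)"
| ax_AndI: "IntCK (Imp A (Imp B (And A B)))"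
| ax_OrI1: "IntCK (Imp A (Or A B))"
| ax_OrI2: "IntCK (Imp B (Or A B))"
| ax_OrE: "IntCK (Imp (Imp A C) (Imp (Imp B C) (Imp (Or A B) C)))"
| ax_EFQ: "IntCK (Imp Bot A)"
| MP: "IntCK (Imp A B) \<Longrightarrow> IntCK A \<Longrightarrow> IntCK B"
| RA_Box: "IntCK (Iff \<phi> \<rho>) \<Longrightarrow> IntCK (Iff (CBox \<phi> \<psi>) (CBox \<rho> \<psi>))"
| RC_Box: "IntCK (Iff \<psi> \<chi>) \<Longrightarrow> IntCK (Iff (CBox \<phi> \<psi>) (CBox \<phi> \<chi>))"
| RA_Dia: "IntCK (Iff \<phi> \<rho>) \<Longrightarrow> IntCK (Iff (CDia \<phi> \<psi>) (CDia \<rho> \<psi>))"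
| RC_Dia: "IntCK (Iff \<psi> \<chi>) \<Longrightarrow> IntCK (Iff (CDia \<phi> \<psi>) (CDia \<phi> \<chi>))"
| CM_Box: "IntCK (Imp (CBox \<phi> (And \<psi> \<chi>)) (And (CBox \<phi> \<psi>) (CBox \<phi> \<chi>)))"
| CC_Box: "IntCK (Imp (And (CBox \<phi> \<psi>) (CBox \<phi> \<chi>)) (CBox \<phi> (And \<psi> \<chi>)))"
| CN_Box: "IntCK (CBox \<phi> Top)"
| CM_Dia: "IntCK (Imp (Or (CDia \<phi> \<psi>) (CDia \<phi> \<chi>)) (CDia \<phi> (Or \<psi> \<chi>)))"
| CC_Dia: "IntCK (Imp (CDia \<phi> (Or \<psi> \<chi>)) (Or (CDia \<phi> \<psi>) (CDia \<phi> \<chi>)))"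
| CN_Dia: "IntCK (Neg (CDia \<phi> Bot))"
| CW: "IntCK (Imp (And (CDia \<phi> \<psi>) (CBox \<phi> \<chi>)) (CDia \<phi> (And \<psi> \<chi>)))"
| CFS: "IntCK (Imp (Imp (CDia \<phi> \<psi>) (CBox \<phi> \<chi>)) (CBox \<phi> (Imp \<psi> \<chi>)))"

text \<open>Commas are associative and commutative:
 this is realised by the structural rule \<open>exch\<close> below, which permutes the
 items at any nesting depth.\<close>

datatype item =
    In form
  | Out form
  | Comp form "item list"

type_synonym seq = "item list"

fun outs :: "item \<Rightarrow> nat" where
  "outs (In \<phi>) = 0"
| "outs (Out \<phi>) = 1"
| "outs (Comp \<psi> ys) = sum_list (map outs ys)"

definition seq_outs :: "seq \<Rightarrow> nat" where
  "seq_outs xs = sum_list (map outs xs)"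

definition input_seq :: "seq \<Rightarrow> bool" where "input_seq xs \<longleftrightarrow> seq_outs xs = 0"
definition nested_seq :: "seq \<Rightarrow> bool" where "nested_seq xs \<longleftrightarrow> seq_outs xs = 1"

text \<open>Convention: the list \<open>x # xs\<close> stands for the sequent \<open>xs, x\<close>.\<close>

fun iin :: "seq \<Rightarrow> form" and iitem :: "item \<Rightarrow> form" where
  "iin [] = Top"
| "iin (x # xs) = And (iin xs) (iitem x)"
| "iitem (In \<phi>) = \<phi>"
| "iitem (Out \<phi>) = Bot"
| "iitem (Comp \<psi> ys) = CDia \<psi> (iin ys)"

lemma size_list_mem_less: "x \<in> set xs \<Longrightarrow> f x < size_list f xs"
  by (induction xs) auto

function (sequential) nint :: "seq \<Rightarrow> form" and oint :: "item \<Rightarrow> form" where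
  "nint xs = (case find (\<lambda>x. outs x \<noteq> 0) xs of
                None \<Rightarrow> Bot
              | Some x \<Rightarrow> Imp (iin (filter (\<lambda>x. outs x = 0) xs)) (oint x))"
| "oint (Out \<phi>) = \<phi>"
| "oint (Comp \<psi> ys) = CBox \<psi> (nint ys)"
| "oint (In \<phi>) = Bot"
  by pat_completeness auto
termination
  apply (relation "measure (case_sum (size_list size) size)")
  apply simp_all
  apply (metis find_Some_iff nth_mem size_list_mem_less)
  done

text \<open>The interpretation i(\<Gamma>): for a nested sequent \<Lambda>, O (O the unique item
 carrying the output formula) it is i(\<Lambda>) \<rightarrow> o(O), where o(\<phi> output) = \<phi> and
 o([\<psi>:\<Gamma>']) = \<psi> box-arrow i(\<Gamma>').\<close>
definition interp :: "seq \<Rightarrow> form" where "interp \<Gamma> = nint \<Gamma>"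

datatype ctx =
    Hole seq
  | CComp seq form ctx

fun fill :: "ctx \<Rightarrow> seq \<Rightarrow> seq" where
  "fill (Hole xs) D = D @ xs"
| "fill (CComp xs \<psi> C) D = Comp \<psi> (fill C D) # xs"

fun strip :: "seq \<Rightarrow> seq" and strip_item :: "item \<Rightarrow> seq" where
  "strip [] = []"
| "strip (x # xs) = strip_item x @ strip xs"
| "strip_item (In \<phi>) = [In \<phi>]"
| "strip_item (Out \<phi>) = []"
| "strip_item (Comp \<psi> ys) = [Comp \<psi> (strip ys)]"

fun down :: "ctx \<Rightarrow> ctx" where
  "down (Hole xs) = Hole (strip xs)"
| "down (CComp xs \<psi> C) = CComp (strip xs) \<psi> (down C)"

inductive derivable :: "seq \<Rightarrow> bool" where
  exch: "derivable (fill C xs) \<Longrightarrow> mset xs = mset ys \<Longrightarrow> nested_seq (fill C ys)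
         \<Longrightarrow> derivable (fill C ys)"
| init: "nested_seq (fill C [In (Atom p), Out (Atom p)]) \<Longrightarrow>
         derivable (fill C [In (Atom p), Out (Atom p)])"
| botL: "nested_seq (fill C [In Bot]) \<Longrightarrow> derivable (fill C [In Bot])"
| andL: "derivable (fill C [In \<phi>, In \<psi>]) \<Longrightarrow> nested_seq (fill C [In (And \<phi> \<psi>)]) \<Longrightarrow>
         derivable (fill C [In (And \<phi> \<psi>)])"
| andR: "derivable (fill C [Out \<phi>]) \<Longrightarrow> derivable (fill C [Out \<psi>]) \<Longrightarrow>
         nested_seq (fill C [Out (And \<phi> \<psi>)]) \<Longrightarrow> derivable (fill C [Out (And \<phi> \<psi>)])"
| orL: "derivable (fill C [In \<phi>]) \<Longrightarrow> derivable (fill C [In \<psi>]) \<Longrightarrow>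
         nested_seq (fill C [In (Or \<phi> \<psi>)]) \<Longrightarrow> derivable (fill C [In (Or \<phi> \<psi>)])"
| orR1: "derivable (fill C [Out \<phi>]) \<Longrightarrow> nested_seq (fill C [Out (Or \<phi> \<psi>)]) \<Longrightarrow>
         derivable (fill C [Out (Or \<phi> \<psi>)])"
| orR2: "derivable (fill C [Out \<psi>]) \<Longrightarrow> nested_seq (fill C [Out (Or \<phi> \<psi>)]) \<Longrightarrow>
         derivable (fill C [Out (Or \<phi> \<psi>)])"
| impL: "derivable (fill (down C) [In (Imp \<phi> \<psi>), Out \<phi>]) \<Longrightarrow> derivable (fill C [In \<psi>]) \<Longrightarrow>
         nested_seq (fill C [In (Imp \<phi> \<psi>)]) \<Longrightarrow> derivable (fill C [In (Imp \<phi> \<psi>)])"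
| impR: "derivable (fill C [In \<phi>, Out \<psi>]) \<Longrightarrow> nested_seq (fill C [Out (Imp \<phi> \<psi>)]) \<Longrightarrow>
         derivable (fill C [Out (Imp \<phi> \<psi>)])"
| boxL: "derivable [In \<phi>, Out \<eta>] \<Longrightarrow> derivable [In \<eta>, Out \<phi>] \<Longrightarrow>
         derivable (fill C [In (CBox \<phi> \<psi>), Comp \<eta> (In \<psi> # \<Delta>)]) \<Longrightarrow>
         nested_seq (fill C [In (CBox \<phi> \<psi>), Comp \<eta> \<Delta>]) \<Longrightarrow>
         derivable (fill C [In (CBox \<phi> \<psi>), Comp \<eta> \<Delta>])"
| boxR: "derivable (fill C [Comp \<phi> [Out \<psi>]]) \<Longrightarrow> nested_seq (fill C [Out (CBox \<phi> \<psi>)]) \<Longrightarrow>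
         derivable (fill C [Out (CBox \<phi> \<psi>)])"
| diaL: "derivable (fill C [Comp \<phi> [In \<psi>]]) \<Longrightarrow> nested_seq (fill C [In (CDia \<phi> \<psi>)]) \<Longrightarrow>
         derivable (fill C [In (CDia \<phi> \<psi>)])"
| diaR: "derivable [In \<phi>, Out \<eta>] \<Longrightarrow> derivable [In \<eta>, Out \<phi>] \<Longrightarrow>
         derivable (fill C [Comp \<eta> (Out \<psi> # \<Delta>)]) \<Longrightarrow>
         nested_seq (fill C [Out (CDia \<phi> \<psi>), Comp \<eta> \<Delta>]) \<Longrightarrow>
         derivable (fill C [Out (CDia \<phi> \<psi>), Comp \<eta> \<Delta>])"

end

theory Submission
  imports Defs
begin

(* Each rule of N.IntCK rewrites a small sequent D inside a
   context C, so it suffices to prove a local implication between the interpretations of the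
   premisses and of D, and to lift it through C.
   If the output formula lies in the hole, i(C{D}) is obtained from i(D) by the monotone
   operations A -> _ and eta box-> _, and a conjunction of premisses lifts through them by CC_Box
   and CN_Box. If the hole holds only inputs, D occurs negatively, and it suffices that the
   inputs of D entail a disjunction of the inputs of the premisses; diamond components of the
   context are crossed with CW, CC_Dia and CN_Dia.
   The left implication rule also has a premiss in the context with the output removed. It is
   absorbed by the fact that (i(Gamma-down) -> i(Gamma)) -> i(Gamma) is derivable, which is
   where CFS is used. *)

section \<open>Derivations from hypotheses\<close>

inductive IntCK_from :: "form set \<Rightarrow> form \<Rightarrow> bool" (infix "\<turnstile>" 50) where
  from_hyp: "A \<in> G \<Longrightarrow> G \<turnstile> A"
| from_IntCK: "IntCK A \<Longrightarrow> G \<turnstile> A"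
| from_mp: "G \<turnstile> Imp A B \<Longrightarrow> G \<turnstile> A \<Longrightarrow> G \<turnstile> B"

lemma IntCK_from_mono: "G \<turnstile> A \<Longrightarrow> G \<subseteq> H \<Longrightarrow> H \<turnstile> A"
  by (induction rule: IntCK_from.induct) (auto intro: IntCK_from.intros)

lemma IntCK_from_empty: "{} \<turnstile> A \<Longrightarrow> IntCK A"
proof (induction "{} :: form set" A rule: IntCK_from.induct)
  case (from_mp A B)
  then show ?case using IntCK.MP by blast
qed auto

lemma IntCK_imp_refl: "IntCK (Imp A A)"
  using IntCK.MP[OF IntCK.MP[OF ax_S ax_K] ax_K[of A A]] .

lemma from_IntCK_mp: "IntCK (Imp A B) \<Longrightarrow> G \<turnstile> A \<Longrightarrow> G \<turnstile> B"
  by (rule from_mp[OF from_IntCK])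

lemma from_IntCK_mp2: "IntCK (Imp A (Imp B C)) \<Longrightarrow> G \<turnstile> A \<Longrightarrow> G \<turnstile> B \<Longrightarrow> G \<turnstile> C"
  by (rule from_mp[OF from_IntCK_mp])

theorem deduction_theorem: "insert A G \<turnstile> B \<Longrightarrow> G \<turnstile> Imp A B"
proof (induction "insert A G" B rule: IntCK_from.induct)
  case (from_hyp B)
  show ?case
  proof (cases "B = A")
    case True
    then show ?thesis by (simp add: IntCK_imp_refl IntCK_from.from_IntCK)
  next
    case False
    with from_hyp have "G \<turnstile> B" by (auto intro: IntCK_from.from_hyp)
    then show ?thesis by (rule from_IntCK_mp[OF ax_K])
  qed
next
  case (from_IntCK B)
  then show ?case by (rule from_IntCK_mp[OF ax_K IntCK_from.from_IntCK])
next
  case (from_mp B C)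
  then show ?case using from_IntCK_mp2[OF ax_S] by blast
qed

lemma IntCK_impI: "{A} \<turnstile> B \<Longrightarrow> IntCK (Imp A B)"
  by (rule IntCK_from_empty[OF deduction_theorem])

lemma IntCK_imp2I: "{A, B} \<turnstile> C \<Longrightarrow> IntCK (Imp A (Imp B C))"
  by (rule IntCK_from_empty[OF deduction_theorem[OF deduction_theorem]]) (simp add: insert_commute)

lemma from_weaken: "G \<turnstile> A \<Longrightarrow> insert B G \<turnstile> A"
  using IntCK_from_mono by blast

lemma from_andI: "G \<turnstile> A \<Longrightarrow> G \<turnstile> B \<Longrightarrow> G \<turnstile> And A B"
  by (rule from_IntCK_mp2[OF ax_AndI])

lemma from_and_iff: "G \<turnstile> And A B \<longleftrightarrow> G \<turnstile> A \<and> G \<turnstile> B"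
  using from_andI from_IntCK_mp[OF ax_AndE1] from_IntCK_mp[OF ax_AndE2] by blast

lemma from_orI1: "G \<turnstile> A \<Longrightarrow> G \<turnstile> Or A B"
  by (rule from_IntCK_mp[OF ax_OrI1])

lemma from_orI2: "G \<turnstile> B \<Longrightarrow> G \<turnstile> Or A B"
  by (rule from_IntCK_mp[OF ax_OrI2])

lemma from_orE: "G \<turnstile> Or A B \<Longrightarrow> insert A G \<turnstile> C \<Longrightarrow> insert B G \<turnstile> C \<Longrightarrow> G \<turnstile> C"
  by (rule from_mp[OF from_IntCK_mp2[OF ax_OrE deduction_theorem deduction_theorem]])

lemma from_botE: "G \<turnstile> Bot \<Longrightarrow> G \<turnstile> A"
  by (rule from_IntCK_mp[OF ax_EFQ])

lemma from_Top: "G \<turnstile> Top"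
  unfolding Top_def Neg_def by (rule from_IntCK[OF ax_EFQ])

lemma from_cut: "G \<turnstile> A \<Longrightarrow> insert A G \<turnstile> B \<Longrightarrow> G \<turnstile> B"
  by (rule from_mp[OF deduction_theorem])

lemma from_cut_mono: "G \<turnstile> A \<Longrightarrow> H \<turnstile> B \<Longrightarrow> H \<subseteq> insert A G \<Longrightarrow> G \<turnstile> B"
  by (meson IntCK_from_mono from_cut)

lemma IntCK_iff_from: "IntCK A \<longleftrightarrow> {} \<turnstile> A"
  using IntCK_from_empty from_IntCK by blast

lemma from_Imp_iff: "G \<turnstile> Imp A B \<longleftrightarrow> insert A G \<turnstile> B"
  by (meson deduction_theorem from_mp from_weaken from_hyp insertI1)

lemma from_insert_And: "insert (And A B) G \<turnstile> C \<longleftrightarrow> insert A (insert B G) \<turnstile> C"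
proof
  assume C: "insert (And A B) G \<turnstile> C"
  have "insert A (insert B G) \<turnstile> And A B" by (simp add: from_and_iff from_hyp)
  then show "insert A (insert B G) \<turnstile> C" by (rule from_cut_mono[OF _ C]) blast
next
  assume C: "insert A (insert B G) \<turnstile> C"
  have A: "insert (And A B) G \<turnstile> A" and B: "insert (And A B) G \<turnstile> B"
    using from_and_iff from_hyp[of "And A B"] by blast+
  have "insert A (insert (And A B) G) \<turnstile> C"
    by (rule from_cut_mono[OF from_weaken[OF B] C]) blast
  then show "insert (And A B) G \<turnstile> C" by (rule from_cut_mono[OF A]) blast
qed

lemma from_insert_Or: "insert (Or A B) G \<turnstile> C \<longleftrightarrow> insert A G \<turnstile> C \<and> insert B G \<turnstile> C"
proof
  assume C: "insert (Or A B) G \<turnstile> C"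
  have "insert A G \<turnstile> Or A B" and "insert B G \<turnstile> Or A B"
    by (simp_all add: from_orI1 from_orI2 from_hyp)
  then show "insert A G \<turnstile> C \<and> insert B G \<turnstile> C"
    using from_cut_mono[OF _ C] by blast
next
  assume "insert A G \<turnstile> C \<and> insert B G \<turnstile> C"
  then have "insert A (insert (Or A B) G) \<turnstile> C" and "insert B (insert (Or A B) G) \<turnstile> C"
    by (auto elim: IntCK_from_mono)
  then show "insert (Or A B) G \<turnstile> C" using from_orE[OF from_hyp[OF insertI1]] by blast
qed

lemma from_insert_Top: "insert Top G \<turnstile> C \<longleftrightarrow> G \<turnstile> C"
  using from_cut[OF from_Top] from_weaken by blast

lemma from_hyp_Imp_Top: "Imp Top A \<in> G \<Longrightarrow> G \<turnstile> A"
  by (rule from_mp[OF from_hyp from_Top])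

(* Left rules: with them simp decomposes hypotheses like a sequent calculus. *)
lemmas from_simps =
  from_Imp_iff from_insert_And from_insert_Or from_insert_Top from_hyp_Imp_Top
  from_and_iff from_Top from_hyp

(* Singletons are special-cased so that one-premiss rules need no trailing Top or Bot. *)
fun Conj :: "form list \<Rightarrow> form" where
  "Conj [] = Top"
| "Conj [A] = A"
| "Conj (A # B # As) = And A (Conj (B # As))"

fun Disj :: "form list \<Rightarrow> form" where
  "Disj [] = Bot"
| "Disj [A] = A"
| "Disj (A # B # As) = Or A (Disj (B # As))"

lemma from_Conj_iff: "G \<turnstile> Conj As \<longleftrightarrow> (\<forall>A\<in>set As. G \<turnstile> A)"
  by (induction As rule: Conj.induct) (auto simp: from_and_iff from_Top)

lemma from_DisjI: "A \<in> set As \<Longrightarrow> G \<turnstile> A \<Longrightarrow> G \<turnstile> Disj As"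
  by (induction As rule: Disj.induct) (auto intro: from_orI1 from_orI2)

lemma from_DisjE: "G \<turnstile> Disj As \<Longrightarrow> (\<And>A. A \<in> set As \<Longrightarrow> insert A G \<turnstile> B) \<Longrightarrow> G \<turnstile> B"
proof (induction As arbitrary: G rule: Disj.induct)
  case 1
  then show ?case by (simp add: from_botE)
next
  case (2 A)
  then show ?case by (simp add: from_cut)
next
  case (3 A A' As)
  let ?D = "Disj (A' # As)"
  show ?case
  proof (rule from_orE[OF "3.prems"(1)[simplified]])
    show "insert A G \<turnstile> B" by (simp add: "3.prems"(2))
    show "insert ?D G \<turnstile> B"
    proof (rule "3.IH")
      show "insert ?D G \<turnstile> ?D" by (simp add: from_hyp)
    next
      fix A'' assume "A'' \<in> set (A' # As)"
      then have "insert A'' G \<turnstile> B" using "3.prems"(2) by simp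
      then show "insert A'' (insert ?D G) \<turnstile> B" by (rule IntCK_from_mono) blast
    qed
  qed
qed

lemma from_Disj_map:
  assumes "G \<turnstile> Disj (map f xs)" and "\<And>x. x \<in> set xs \<Longrightarrow> insert (f x) G \<turnstile> g x"
  shows "G \<turnstile> Disj (map g xs)"
proof (rule from_DisjE[OF assms(1)])
  fix A assume "A \<in> set (map f xs)"
  then obtain x where "x \<in> set xs" and "A = f x" by auto
  then show "insert A G \<turnstile> Disj (map g xs)"
    by (intro from_DisjI[of "g x"]) (simp_all add: assms(2))
qed

lemma IntCK_imp_trans: "IntCK (Imp A B) \<Longrightarrow> IntCK (Imp B C) \<Longrightarrow> IntCK (Imp A C)"
  by (rule IntCK_impI, rule from_IntCK_mp[of B C], assumption, rule from_IntCK_mp[of A B])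
    (simp_all add: from_hyp)

lemma IntCK_iffI: "IntCK (Imp A B) \<Longrightarrow> IntCK (Imp B A) \<Longrightarrow> IntCK (Iff A B)"
  unfolding Iff_def by (rule IntCK.MP[OF IntCK.MP[OF ax_AndI]])

lemma IntCK_iffD1: "IntCK (Iff A B) \<Longrightarrow> IntCK (Imp A B)"
  unfolding Iff_def by (rule IntCK.MP[OF ax_AndE1])

lemma IntCK_iffD2: "IntCK (Iff A B) \<Longrightarrow> IntCK (Imp B A)"
  unfolding Iff_def by (rule IntCK.MP[OF ax_AndE2])

lemma Conj_imp_lift: "IntCK (Imp (Conj Xs) Y) \<Longrightarrow> IntCK (Imp (Conj (map (Imp A) Xs)) (Imp A Y))"
proof (rule IntCK_imp2I)
  let ?G = "{Conj (map (Imp A) Xs), A}"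
  assume "IntCK (Imp (Conj Xs) Y)"
  moreover have "?G \<turnstile> Conj Xs"
    unfolding from_Conj_iff
  proof
    fix X assume "X \<in> set Xs"
    moreover have "?G \<turnstile> Conj (map (Imp A) Xs)" by (simp add: from_hyp)
    ultimately have "?G \<turnstile> Imp A X" by (simp add: from_Conj_iff)
    then show "?G \<turnstile> X" by (rule from_mp) (simp add: from_hyp)
  qed
  ultimately show "?G \<turnstile> Y" by (rule from_IntCK_mp)
qed

lemma IntCK_Conj: "(\<And>A. A \<in> set As \<Longrightarrow> IntCK A) \<Longrightarrow> IntCK (Conj As)"
  by (rule IntCK_from_empty) (simp add: from_Conj_iff from_IntCK)

lemma Conj_map_mono:
  "(\<And>x. x \<in> set xs \<Longrightarrow> IntCK (Imp (f x) (g x))) \<Longrightarrow> IntCK (Imp (Conj (map f xs)) (Conj (map g xs)))"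
proof (rule IntCK_impI)
  assume fg: "\<And>x. x \<in> set xs \<Longrightarrow> IntCK (Imp (f x) (g x))"
  have "{Conj (map f xs)} \<turnstile> Conj (map f xs)" by (simp add: from_hyp)
  then show "{Conj (map f xs)} \<turnstile> Conj (map g xs)"
    by (auto simp: from_Conj_iff intro: from_IntCK_mp[OF fg])
qed

lemma IntCK_uncurry: "IntCK (Imp A (Imp B C)) \<Longrightarrow> IntCK (Imp (And A B) C)"
proof (rule IntCK_impI)
  assume "IntCK (Imp A (Imp B C))"
  moreover have "{And A B} \<turnstile> And A B" by (simp add: from_hyp)
  ultimately show "{And A B} \<turnstile> C" by (simp add: from_and_iff from_IntCK_mp2)
qed

section \<open>Derived modal rules\<close>

lemma CBox_mono: "IntCK (Imp A B) \<Longrightarrow> IntCK (Imp (CBox \<phi> A) (CBox \<phi> B))"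
proof -
  assume AB: "IntCK (Imp A B)"
  have "IntCK (Imp A (And A B))"
    by (rule IntCK_impI, rule from_andI) (simp_all add: from_hyp from_IntCK_mp[OF AB])
  then have "IntCK (Iff A (And A B))" by (rule IntCK_iffI[OF _ ax_AndE1])
  then have "IntCK (Imp (CBox \<phi> A) (CBox \<phi> (And A B)))" by (rule IntCK_iffD1[OF RC_Box])
  then show ?thesis by (rule IntCK_imp_trans[OF _ IntCK_imp_trans[OF CM_Box ax_AndE2]])
qed

lemma CDia_mono: "IntCK (Imp A B) \<Longrightarrow> IntCK (Imp (CDia \<phi> A) (CDia \<phi> B))"
proof -
  assume AB: "IntCK (Imp A B)"
  have "IntCK (Imp (Or A B) B)"
    by (rule IntCK_impI, rule from_orE[of _ A B]) (simp_all add: from_hyp from_IntCK_mp[OF AB])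
  then have "IntCK (Iff (Or A B) B)" by (rule IntCK_iffI[OF _ ax_OrI2])
  then have "IntCK (Imp (CDia \<phi> (Or A B)) (CDia \<phi> B))" by (rule IntCK_iffD1[OF RC_Dia])
  moreover have "IntCK (Imp (CDia \<phi> A) (CDia \<phi> (Or A B)))"
    by (rule IntCK_imp_trans[OF ax_OrI1 CM_Dia])
  ultimately show ?thesis by (rule IntCK_imp_trans[rotated])
qed

lemma RA_Box_imp: "IntCK (Imp \<phi> \<eta>) \<Longrightarrow> IntCK (Imp \<eta> \<phi>) \<Longrightarrow> IntCK (Imp (CBox \<phi> \<psi>) (CBox \<eta> \<psi>))"
  by (rule IntCK_iffD1[OF RA_Box[OF IntCK_iffI]])

lemma RA_Dia_imp: "IntCK (Imp \<phi> \<eta>) \<Longrightarrow> IntCK (Imp \<eta> \<phi>) \<Longrightarrow> IntCK (Imp (CDia \<eta> \<psi>) (CDia \<phi> \<psi>))"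
  by (rule IntCK_iffD2[OF RA_Dia[OF IntCK_iffI]])

lemma CBox_Conj: "IntCK (Imp (Conj (map (CBox \<phi>) As)) (CBox \<phi> (Conj As)))"
proof (induction As rule: Conj.induct)
  case 1
  then show ?case by (simp add: IntCK.MP[OF ax_K CN_Box])
next
  case (2 A)
  then show ?case by (simp add: IntCK_imp_refl)
next
  case (3 A B As)
  let ?G = "{And (CBox \<phi> A) (Conj (map (CBox \<phi>) (B # As)))}"
  have "?G \<turnstile> And (CBox \<phi> A) (Conj (map (CBox \<phi>) (B # As)))" by (simp add: from_hyp)
  then have "?G \<turnstile> CBox \<phi> A" and "?G \<turnstile> CBox \<phi> (Conj (B # As))"
    unfolding from_and_iff using from_IntCK_mp[OF "3.IH"] by auto
  then have "?G \<turnstile> CBox \<phi> (And A (Conj (B # As)))" by (intro from_IntCK_mp[OF CC_Box] from_andI)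
  then show ?case by (simp add: IntCK_impI)
qed

lemma CDia_Disj: "IntCK (Imp (CDia \<phi> (Disj As)) (Disj (map (CDia \<phi>) As)))"
proof (induction As rule: Disj.induct)
  case 1
  then show ?case using CN_Dia by (simp add: Neg_def)
next
  case (2 A)
  then show ?case by (simp add: IntCK_imp_refl)
next
  case (3 A B As)
  let ?G = "{CDia \<phi> (Or A (Disj (B # As)))}"
  have "?G \<turnstile> Or (CDia \<phi> A) (CDia \<phi> (Disj (B # As)))"
    by (rule from_IntCK_mp[OF CC_Dia]) (simp add: from_hyp)
  then have "?G \<turnstile> Or (CDia \<phi> A) (Disj (map (CDia \<phi>) (B # As)))"
  proof (rule from_orE)
    show "insert (CDia \<phi> A) ?G \<turnstile> Or (CDia \<phi> A) (Disj (map (CDia \<phi>) (B # As)))"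
      by (rule from_orI1) (simp add: from_hyp)
    show "insert (CDia \<phi> (Disj (B # As))) ?G \<turnstile> Or (CDia \<phi> A) (Disj (map (CDia \<phi>) (B # As)))"
      by (rule from_orI2, rule from_IntCK_mp[OF "3.IH"]) (simp add: from_hyp)
  qed
  then show ?case by (simp add: IntCK_impI)
qed

lemma Conj_box_lift: "IntCK (Imp (Conj Xs) Y) \<Longrightarrow> IntCK (Imp (Conj (map (CBox \<eta>) Xs)) (CBox \<eta> Y))"
  by (rule IntCK_imp_trans[OF CBox_Conj CBox_mono])

lemma seq_outs_simps [simp]:
  "seq_outs [] = 0"
  "seq_outs (x # xs) = outs x + seq_outs xs"
  "seq_outs (xs @ ys) = seq_outs xs + seq_outs ys"
  by (simp_all add: seq_outs_def)

lemma outs_Comp [simp]: "outs (Comp \<psi> ys) = seq_outs ys"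
  by (simp add: seq_outs_def)

declare outs.simps(3) [simp del]

lemmas seq_kind_defs = input_seq_def nested_seq_def

lemma seq_outs_eq_0_iff: "seq_outs xs = 0 \<longleftrightarrow> (\<forall>x\<in>set xs. outs x = 0)"
  by (induction xs) auto

lemma input_seq_iff: "input_seq xs \<longleftrightarrow> (\<forall>x\<in>set xs. outs x = 0)"
  by (simp add: input_seq_def seq_outs_eq_0_iff)

lemma seq_outs_fill: "seq_outs (fill C D) = seq_outs (fill C []) + seq_outs D"
  by (induction C) auto

lemma outs_le_seq_outs: "x \<in> set xs \<Longrightarrow> outs x \<le> seq_outs xs"
  by (induction xs) auto

lemma nested_has_output: "nested_seq \<Gamma> \<Longrightarrow> \<exists>u\<in>set \<Gamma>. outs u \<noteq> 0"
  using input_seq_iff[of \<Gamma>] by (auto simp: seq_kind_defs)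

lemma nested_find_output:
  "nested_seq \<Gamma> \<Longrightarrow> u \<in> set \<Gamma> \<Longrightarrow> outs u \<noteq> 0 \<Longrightarrow> find (\<lambda>x. outs x \<noteq> 0) \<Gamma> = Some u"
proof (induction \<Gamma>)
  case (Cons y ys)
  show ?case
  proof (cases "outs y = 0")
    case True
    then show ?thesis using Cons by (auto simp: nested_seq_def)
  next
    case False
    have "u = y"
    proof (rule ccontr)
      assume "u \<noteq> y"
      then have "outs u \<le> seq_outs ys" using Cons.prems(2) by (simp add: outs_le_seq_outs)
      then show False using Cons.prems False by (simp add: nested_seq_def)
    qed
    with False show ?thesis by simp
  qed
qed simp

lemma seq_outs_mset: "mset xs = mset ys \<Longrightarrow> seq_outs xs = seq_outs ys"
  by (simp add: seq_outs_def mset_map flip: sum_mset_sum_list)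

lemma nested_fill_cases:
  "nested_seq (fill C D) \<Longrightarrow>
    input_seq (fill C []) \<and> nested_seq D \<or> nested_seq (fill C []) \<and> input_seq D"
  by (auto simp: seq_kind_defs seq_outs_fill[of C D] add_is_1)

lemma from_iin_iff: "G \<turnstile> iin L \<longleftrightarrow> (\<forall>x\<in>set L. G \<turnstile> iitem x)"
  by (induction L) (auto simp: from_and_iff from_Top)

lemma from_iin_append: "G \<turnstile> iin (E @ F) \<longleftrightarrow> G \<turnstile> iin E \<and> G \<turnstile> iin F"
  by (auto simp: from_iin_iff)

lemma iin_append_curry: "IntCK (Imp (Imp (iin (E @ F)) X) (Imp (iin E) (Imp (iin F) X)))"
  by (rule IntCK_imp2I, rule deduction_theorem, rule from_mp[of _ "iin (E @ F)"])
    (simp_all add: from_hyp from_iin_append)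

lemma iin_append_uncurry: "IntCK (Imp (Imp (iin E) (Imp (iin F) X)) (Imp (iin (E @ F)) X))"
proof (rule IntCK_imp2I)
  let ?G = "{Imp (iin E) (Imp (iin F) X), iin (E @ F)}"
  have "?G \<turnstile> iin (E @ F)" by (simp add: from_hyp)
  then have "?G \<turnstile> iin E" and "?G \<turnstile> iin F" by (simp_all add: from_iin_append)
  moreover have "?G \<turnstile> Imp (iin E) (Imp (iin F) X)" by (simp add: from_hyp)
  ultimately show "?G \<turnstile> X" by (meson from_mp)
qed

lemma iin_mono_set: "set L \<subseteq> set L' \<Longrightarrow> IntCK (Imp (iin L') (iin L))"
  by (rule IntCK_impI) (use from_iin_iff[of "{iin L'}"] from_hyp[of "iin L'" "{iin L'}"] in blast)

lemma interp_nested: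
  "nested_seq \<Gamma> \<Longrightarrow> u \<in> set \<Gamma> \<Longrightarrow> outs u \<noteq> 0 \<Longrightarrow>
   interp \<Gamma> = Imp (iin (filter (\<lambda>x. outs x = 0) \<Gamma>)) (oint u)"
  using nested_find_output[of \<Gamma> u] by (simp add: interp_def)

lemma filter_input_seq: "input_seq xs \<Longrightarrow> filter (\<lambda>x. outs x = 0) xs = xs"
  by (simp add: input_seq_iff)

lemma interp_Comp_Cons:
  "input_seq xs \<Longrightarrow> nested_seq \<Gamma> \<Longrightarrow> interp (Comp \<eta> \<Gamma> # xs) = Imp (iin xs) (CBox \<eta> (interp \<Gamma>))"
  by (subst interp_nested[of _ "Comp \<eta> \<Gamma>"])
    (simp_all add: filter_input_seq, simp_all add: seq_kind_defs interp_def)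

lemma interp_mono_set:
  assumes "nested_seq \<Gamma>" "nested_seq \<Gamma>'" "set \<Gamma> \<subseteq> set \<Gamma>'"
  shows "IntCK (Imp (interp \<Gamma>) (interp \<Gamma>'))"
proof -
  obtain u where u: "u \<in> set \<Gamma>" "outs u \<noteq> 0" using nested_has_output[OF assms(1)] by blast
  let ?F = "filter (\<lambda>x. outs x = 0) \<Gamma>" and ?F' = "filter (\<lambda>x. outs x = 0) \<Gamma>'"
  have "{Imp (iin ?F) (oint u), iin ?F'} \<turnstile> oint u"
  proof (rule from_mp)
    have "{Imp (iin ?F) (oint u), iin ?F'} \<turnstile> iin ?F'" by (simp add: from_hyp)
    then show "{Imp (iin ?F) (oint u), iin ?F'} \<turnstile> iin ?F"
      using assms(3) by (auto simp: from_iin_iff)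
  qed (simp add: from_hyp)
  then show ?thesis
    using u assms by (simp add: interp_nested[of _ u] subsetD IntCK_imp2I)
qed

lemma interp_input_prefix:
  assumes "input_seq E" "nested_seq \<Gamma>"
  shows "IntCK (Imp (interp (E @ \<Gamma>)) (Imp (iin E) (interp \<Gamma>)))"
    and "IntCK (Imp (Imp (iin E) (interp \<Gamma>)) (interp (E @ \<Gamma>)))"
proof -
  obtain u where u: "u \<in> set \<Gamma>" "outs u \<noteq> 0" using nested_has_output[OF assms(2)] by blast
  have "nested_seq (E @ \<Gamma>)" using assms by (simp add: seq_kind_defs)
  then have "interp (E @ \<Gamma>) = Imp (iin (E @ filter (\<lambda>x. outs x = 0) \<Gamma>)) (oint u)"
    using u assms(1) by (simp add: interp_nested[of _ u] filter_input_seq)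
  moreover have "interp \<Gamma> = Imp (iin (filter (\<lambda>x. outs x = 0) \<Gamma>)) (oint u)"
    using interp_nested[OF assms(2) u] .
  ultimately show "IntCK (Imp (interp (E @ \<Gamma>)) (Imp (iin E) (interp \<Gamma>)))"
    and "IntCK (Imp (Imp (iin E) (interp \<Gamma>)) (interp (E @ \<Gamma>)))"
    by (simp_all add: iin_append_curry iin_append_uncurry)
qed

lemma interp_input_suffix:
  assumes "nested_seq \<Gamma>" "input_seq E"
  shows "IntCK (Imp (interp (\<Gamma> @ E)) (Imp (iin E) (interp \<Gamma>)))"
    and "IntCK (Imp (Imp (iin E) (interp \<Gamma>)) (interp (\<Gamma> @ E)))"
proof -
  have "nested_seq (\<Gamma> @ E)" "nested_seq (E @ \<Gamma>)" using assms by (simp_all add: seq_kind_defs)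
  then have "IntCK (Imp (interp (\<Gamma> @ E)) (interp (E @ \<Gamma>)))"
    and "IntCK (Imp (interp (E @ \<Gamma>)) (interp (\<Gamma> @ E)))"
    by (simp_all add: interp_mono_set)
  then show "IntCK (Imp (interp (\<Gamma> @ E)) (Imp (iin E) (interp \<Gamma>)))"
    and "IntCK (Imp (Imp (iin E) (interp \<Gamma>)) (interp (\<Gamma> @ E)))"
    using interp_input_prefix[OF assms(2,1)] IntCK_imp_trans by blast+
qed

lemma strip_input:
  "input_seq xs \<Longrightarrow> strip xs = xs"
  "outs y = 0 \<Longrightarrow> strip_item y = [y]"
  by (induction xs and y rule: strip_strip_item.induct) (auto simp: input_seq_iff seq_outs_eq_0_iff)

lemma input_seq_strip: "input_seq (strip xs)" and "seq_outs (strip_item y) = 0"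
  by (induction xs and y rule: strip_strip_item.induct) (simp_all add: input_seq_def)

lemma set_strip: "set (strip xs) = (\<Union>x\<in>set xs. set (strip_item x))"
  by (induction xs) auto

lemma input_seq_fill_down: "input_seq (fill (down C) [])"
  by (induction C) (simp_all add: input_seq_def input_seq_strip(1)[unfolded input_seq_def])

lemma down_input_context: "input_seq (fill C []) \<Longrightarrow> down C = C"
  by (induction C) (simp_all add: input_seq_def strip_input(1)[unfolded input_seq_def])

lemma set_strip_nested:
  assumes "nested_seq \<Gamma>" "u \<in> set \<Gamma>" "outs u \<noteq> 0"
  shows "set (strip \<Gamma>) \<subseteq> set (filter (\<lambda>x. outs x = 0) \<Gamma>) \<union> set (strip_item u)"
proof
  fix x assume "x \<in> set (strip \<Gamma>)"
  then obtain y where y: "y \<in> set \<Gamma>" "x \<in> set (strip_item y)" by (auto simp: set_strip)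
  show "x \<in> set (filter (\<lambda>x. outs x = 0) \<Gamma>) \<union> set (strip_item u)"
  proof (cases "outs y = 0")
    case True
    then show ?thesis using y by (simp add: strip_input(2))
  next
    case False
    then have "find (\<lambda>x. outs x \<noteq> 0) \<Gamma> = Some y"
      using nested_find_output[OF assms(1) y(1)] by blast
    then have "y = u" using nested_find_output[OF assms] by simp
    then show ?thesis using y by simp
  qed
qed

lemma interp_discharge_strip:
  "nested_seq \<Gamma> \<Longrightarrow> IntCK (Imp (Imp (iin (strip \<Gamma>)) (interp \<Gamma>)) (interp \<Gamma>))"
proof (induction "size_list size \<Gamma>" arbitrary: \<Gamma> rule: less_induct)
  case less
  obtain u where u: "u \<in> set \<Gamma>" "outs u \<noteq> 0" using nested_has_output[OF less.prems] by blast
  let ?F = "filter (\<lambda>x. outs x = 0) \<Gamma>"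
  let ?H = "Imp (iin (strip \<Gamma>)) (interp \<Gamma>)"
  have interp: "interp \<Gamma> = Imp (iin ?F) (oint u)" by (rule interp_nested[OF less.prems u])
  have from_item: "insert (iin (strip_item u)) {?H, iin ?F} \<turnstile> oint u"
  proof -
    let ?G = "insert (iin (strip_item u)) {?H, iin ?F}"
    have "?G \<turnstile> iin ?F" and "?G \<turnstile> iin (strip_item u)" by (simp_all add: from_hyp)
    then have "?G \<turnstile> iin (strip \<Gamma>)"
      using set_strip_nested[OF less.prems u] by (auto simp: from_iin_iff)
    then have "?G \<turnstile> interp \<Gamma>" by (rule from_mp[rotated]) (simp add: from_hyp)
    then show "?G \<turnstile> oint u" unfolding interp by (rule from_mp) (simp add: from_hyp)
  qed
  show ?case
  proof (cases u)
    case In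
    then show ?thesis using u(2) by simp
  next
    case (Out \<chi>)
    then have "{?H, iin ?F} \<turnstile> oint u" using from_item by (simp add: from_cut[OF from_Top])
    then show ?thesis unfolding interp by (rule IntCK_imp2I)
  next
    case (Comp \<eta> ys)
    have ys: "nested_seq ys"
      using u(2) outs_le_seq_outs[OF u(1)] less.prems Comp by (simp add: seq_kind_defs)
    have "size_list size ys < size_list size \<Gamma>"
      using size_list_mem_less[OF u(1), of size] Comp by simp
    then have IH: "IntCK (Imp (Imp (iin (strip ys)) (interp ys)) (interp ys))"
      using less.hyps ys by blast
    \<comment> \<open>The stripped component contributes the hypothesis ?D; CFS moves it under the box.\<close>
    let ?D = "CDia \<eta> (iin (strip ys))"
    have "insert ?D {?H, iin ?F} \<turnstile> CBox \<eta> (interp ys)"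
    proof (rule from_cut)
      show "insert ?D {?H, iin ?F} \<turnstile> iin (strip_item u)"
        using Comp by (simp add: from_and_iff from_Top from_hyp)
      show "insert (iin (strip_item u)) (insert ?D {?H, iin ?F}) \<turnstile> CBox \<eta> (interp ys)"
        using IntCK_from_mono[OF from_item] Comp by (auto simp: interp_def)
    qed
    then have "{?H, iin ?F} \<turnstile> Imp ?D (CBox \<eta> (interp ys))" by (rule deduction_theorem)
    then have "{?H, iin ?F} \<turnstile> CBox \<eta> (interp ys)"
      by (rule from_IntCK_mp[OF CBox_mono[OF IH] from_IntCK_mp[OF CFS]])
    then show ?thesis unfolding interp Comp by (simp add: interp_def IntCK_imp2I)
  qed
qed

section \<open>Soundness of rules applied in a context\<close>

lemma fill_kinds:
  "input_seq (fill C []) \<Longrightarrow> nested_seq D \<Longrightarrow> nested_seq (fill C D)"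
  "input_seq (fill C []) \<Longrightarrow> input_seq D \<Longrightarrow> input_seq (fill C D)"
  "nested_seq (fill C []) \<Longrightarrow> input_seq D \<Longrightarrow> nested_seq (fill C D)"
  by (simp_all add: seq_kind_defs seq_outs_fill[of C D])

lemma output_context_sound:
  assumes "input_seq (fill C [])" "nested_seq D" "\<forall>D'\<in>set Ds. nested_seq D'"
    and "IntCK (Imp (Conj (map interp Ds)) (interp D))"
  shows "IntCK (Imp (Conj (map (\<lambda>D'. interp (fill C D')) Ds)) (interp (fill C D)))"
  using assms
proof (induction C)
  case (Hole xs)
  have xs: "input_seq xs" using Hole.prems(1) by simp
  have "IntCK (Imp (Conj (map (\<lambda>D'. interp (D' @ xs)) Ds)) (Conj (map (\<lambda>D'. Imp (iin xs) (interp D')) Ds)))"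
    by (rule Conj_map_mono) (use Hole.prems(3) interp_input_suffix(1)[OF _ xs] in blast)
  moreover have "IntCK (Imp (Conj (map (\<lambda>D'. Imp (iin xs) (interp D')) Ds)) (Imp (iin xs) (interp D)))"
    using Conj_imp_lift[OF Hole.prems(4), of "iin xs"] by (simp add: o_def)
  ultimately have "IntCK (Imp (Conj (map (\<lambda>D'. interp (D' @ xs)) Ds)) (Imp (iin xs) (interp D)))"
    by (rule IntCK_imp_trans)
  then show ?case
    unfolding fill.simps by (rule IntCK_imp_trans[OF _ interp_input_suffix(2)[OF Hole.prems(2) xs]])
next
  case (CComp xs \<eta> C)
  have xs: "input_seq xs" and C: "input_seq (fill C [])"
    using CComp.prems(1) by (simp_all add: input_seq_def)
  have maps: "map (\<lambda>D'. interp (Comp \<eta> (fill C D') # xs)) Ds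
      = map (\<lambda>D'. Imp (iin xs) (CBox \<eta> (interp (fill C D')))) Ds"
    using CComp.prems(3) by (simp add: interp_Comp_Cons[OF xs fill_kinds(1)[OF C]])
  have "IntCK (Imp (Conj (map (\<lambda>D'. Imp (iin xs) (CBox \<eta> (interp (fill C D')))) Ds))
      (Imp (iin xs) (CBox \<eta> (interp (fill C D)))))"
    using Conj_imp_lift[OF Conj_box_lift[OF CComp.IH[OF C CComp.prems(2-4)]]] by (simp add: o_def)
  then show ?case
    unfolding fill.simps maps interp_Comp_Cons[OF xs fill_kinds(1)[OF C CComp.prems(2)]] .
qed

lemma input_context_lift:
  assumes "input_seq (fill C [])" "\<forall>D'\<in>set Ds. nested_seq D'"
    and "IntCK (Imp (iin D) (Imp (Conj (map interp Ds)) (Disj (map iin Es))))"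
  shows "IntCK (Imp (iin (fill C D))
    (Imp (Conj (map (\<lambda>D'. interp (fill C D')) Ds)) (Disj (map (\<lambda>E. iin (fill C E)) Es))))"
  using assms
proof (induction C)
  case (Hole ys)
  have ys: "input_seq ys" using Hole.prems(1) by simp
  let ?G = "{iin (D @ ys), Conj (map (\<lambda>D'. interp (D' @ ys)) Ds)}"
  have "?G \<turnstile> iin (D @ ys)" and prem: "?G \<turnstile> Conj (map (\<lambda>D'. interp (D' @ ys)) Ds)"
    by (simp_all add: from_hyp)
  then have D: "?G \<turnstile> iin D" and ys_hyp: "?G \<turnstile> iin ys" by (simp_all add: from_iin_append)
  have "?G \<turnstile> Conj (map interp Ds)"
    using prem Hole.prems(2)
    by (auto simp: from_Conj_iff intro: from_IntCK_mp2[OF interp_input_suffix(1)[OF _ ys] _ ys_hyp])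
  then have "?G \<turnstile> Disj (map iin Es)" by (rule from_IntCK_mp2[OF Hole.prems(3) D])
  then have "?G \<turnstile> Disj (map (\<lambda>E. iin (E @ ys)) Es)"
    by (rule from_Disj_map) (simp add: from_iin_append from_hyp from_weaken[OF ys_hyp])
  then show ?case by (simp add: IntCK_imp2I)
next
  case (CComp ys \<eta> C)
  have ys: "input_seq ys" and C: "input_seq (fill C [])"
    using CComp.prems(1) by (simp_all add: input_seq_def)
  let ?I = "\<lambda>D'. interp (fill C D')"
  have maps: "map (\<lambda>D'. interp (Comp \<eta> (fill C D') # ys)) Ds
      = map (\<lambda>D'. Imp (iin ys) (CBox \<eta> (?I D'))) Ds"
    using CComp.prems(2) by (simp add: interp_Comp_Cons[OF ys fill_kinds(1)[OF C]])
  let ?G = "{And (iin ys) (CDia \<eta> (iin (fill C D))), Conj (map (\<lambda>D'. Imp (iin ys) (CBox \<eta> (?I D'))) Ds)}"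
  have "?G \<turnstile> And (iin ys) (CDia \<eta> (iin (fill C D)))"
    and prem: "?G \<turnstile> Conj (map (\<lambda>D'. Imp (iin ys) (CBox \<eta> (?I D'))) Ds)"
    by (simp_all add: from_hyp)
  then have ys_hyp: "?G \<turnstile> iin ys" and dia: "?G \<turnstile> CDia \<eta> (iin (fill C D))"
    by (simp_all add: from_and_iff)
  have "?G \<turnstile> Conj (map (CBox \<eta>) (map ?I Ds))"
    using prem by (auto simp: from_Conj_iff intro: from_mp[OF _ ys_hyp])
  then have "?G \<turnstile> CBox \<eta> (Conj (map ?I Ds))" by (rule from_IntCK_mp[OF CBox_Conj])
  then have "?G \<turnstile> CDia \<eta> (And (iin (fill C D)) (Conj (map ?I Ds)))"
    by (rule from_IntCK_mp[OF CW from_andI[OF dia]])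
  then have "?G \<turnstile> CDia \<eta> (Disj (map (\<lambda>E. iin (fill C E)) Es))"
    by (rule from_IntCK_mp[OF CDia_mono[OF IntCK_uncurry[OF CComp.IH[OF C CComp.prems(2,3)]]]])
  then have "?G \<turnstile> Disj (map (\<lambda>E. CDia \<eta> (iin (fill C E))) Es)"
    using from_IntCK_mp[OF CDia_Disj[of \<eta> "map (\<lambda>E. iin (fill C E)) Es"]] by (simp add: o_def)
  then have "?G \<turnstile> Disj (map (\<lambda>E. And (iin ys) (CDia \<eta> (iin (fill C E)))) Es)"
    by (rule from_Disj_map) (simp add: from_and_iff from_hyp from_weaken[OF ys_hyp])
  then show ?case unfolding fill.simps maps by (simp add: IntCK_imp2I)
qed

lemma input_hole_sound:
  assumes "nested_seq \<Gamma>" "input_seq D" "\<forall>E\<in>set Es. input_seq E" "\<forall>D'\<in>set Ds. nested_seq D'"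
    and "IntCK (Imp (iin D) (Imp (Conj (map interp Ds)) (Disj (map iin Es))))"
  shows "IntCK (Imp (Conj (map (\<lambda>D'. interp (D' @ strip \<Gamma>)) Ds @ map (\<lambda>E. interp (E @ \<Gamma>)) Es))
    (interp (D @ \<Gamma>)))"
proof -
  let ?P = "Conj (map (\<lambda>D'. interp (D' @ strip \<Gamma>)) Ds @ map (\<lambda>E. interp (E @ \<Gamma>)) Es)"
  let ?G = "{iin D, ?P}"
  let ?K = "insert (iin (strip \<Gamma>)) ?G"
  have prem: "?K \<turnstile> ?P" and strip: "?K \<turnstile> iin (strip \<Gamma>)" and D: "?K \<turnstile> iin D"
    by (simp_all add: from_hyp)
  have "?K \<turnstile> Conj (map interp Ds)"
    using prem assms(4)
    by (auto simp: from_Conj_iff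
        intro: from_IntCK_mp2[OF interp_input_suffix(1)[OF _ input_seq_strip(1)] _ strip])
  then have "?K \<turnstile> Disj (map iin Es)" by (rule from_IntCK_mp2[OF assms(5) D])
  then have "?K \<turnstile> interp \<Gamma>"
  proof (rule from_DisjE)
    fix A assume "A \<in> set (map iin Es)"
    then obtain E where E: "E \<in> set Es" and A: "A = iin E" by auto
    then have "insert A ?K \<turnstile> interp (E @ \<Gamma>)"
      using from_weaken[OF prem] by (auto simp: from_Conj_iff)
    moreover have "insert A ?K \<turnstile> iin E" by (simp add: A from_hyp)
    ultimately show "insert A ?K \<turnstile> interp \<Gamma>"
      using E assms(3) by (blast intro: from_IntCK_mp2[OF interp_input_prefix(1)[OF _ assms(1)]])
  qed
  then have "?G \<turnstile> interp \<Gamma>"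
    by (rule from_IntCK_mp[OF interp_discharge_strip[OF assms(1)] deduction_theorem])
  then have "{?P} \<turnstile> interp (D @ \<Gamma>)"
    by (rule from_IntCK_mp[OF interp_input_prefix(2)[OF assms(2,1)] deduction_theorem])
  then show ?thesis by (rule IntCK_impI)
qed

lemma input_context_sound:
  assumes "nested_seq (fill C [])" "input_seq D" "\<forall>E\<in>set Es. input_seq E"
    and "\<forall>D'\<in>set Ds. nested_seq D'"
    and "IntCK (Imp (iin D) (Imp (Conj (map interp Ds)) (Disj (map iin Es))))"
  shows "IntCK (Imp (Conj (map (\<lambda>D'. interp (fill (down C) D')) Ds @ map (\<lambda>E. interp (fill C E)) Es))
    (interp (fill C D)))"
  using assms
proof (induction C)
  case (Hole xs)
  then show ?case using input_hole_sound[of xs D Es Ds] by simp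
next
  case (CComp xs \<eta> C)
  have "seq_outs (fill C []) + seq_outs xs = 1" using CComp.prems(1) by (simp add: nested_seq_def)
  then consider (output_here) "nested_seq xs" "input_seq (fill C [])"
    | (output_inside) "input_seq xs" "nested_seq (fill C [])"
    by (auto simp: seq_kind_defs add_is_1)
  then show ?case
  proof cases
    case output_here
    let ?C = "CComp [] \<eta> C"
    have C: "input_seq (fill ?C [])" using output_here(2) by (simp add: input_seq_def)
    have "input_seq (fill ?C D)" "\<forall>E\<in>set (map (fill ?C) Es). input_seq E"
      "\<forall>D'\<in>set (map (fill ?C) Ds). nested_seq D'"
      using CComp.prems(2-4) fill_kinds(1,2)[OF C] by auto
    moreover have "IntCK (Imp (iin (fill ?C D))
      (Imp (Conj (map interp (map (fill ?C) Ds))) (Disj (map iin (map (fill ?C) Es)))))"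
      using input_context_lift[OF C CComp.prems(4,5)] by (simp add: o_def)
    ultimately have "IntCK (Imp (Conj (map (\<lambda>D'. interp (D' @ strip xs)) (map (fill ?C) Ds)
        @ map (\<lambda>E. interp (E @ xs)) (map (fill ?C) Es))) (interp (fill ?C D @ xs)))"
      by (rule input_hole_sound[OF output_here(1)])
    then show ?thesis using down_input_context[OF output_here(2)] by (simp add: o_def)
  next
    case output_inside
    let ?I = "\<lambda>C D'. interp (fill C D')"
    have IH: "IntCK (Imp (Conj (map (?I (down C)) Ds @ map (?I C) Es)) (?I C D))"
      using CComp.IH[OF output_inside(2) CComp.prems(2-5)] .
    have maps: "map (\<lambda>D'. interp (fill (down (CComp xs \<eta> C)) D')) Ds
        @ map (\<lambda>E. interp (fill (CComp xs \<eta> C) E)) Es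
      = map (\<lambda>X. Imp (iin xs) (CBox \<eta> X)) (map (?I (down C)) Ds @ map (?I C) Es)"
      using CComp.prems(3,4) output_inside input_seq_fill_down
      by (simp add: strip_input(1) interp_Comp_Cons fill_kinds)
    have "interp (fill (CComp xs \<eta> C) D) = Imp (iin xs) (CBox \<eta> (?I C D))"
      using output_inside CComp.prems(2) by (simp add: interp_Comp_Cons fill_kinds)
    then show ?thesis
      unfolding maps using Conj_imp_lift[OF Conj_box_lift[OF IH]] by (simp add: o_def)
  qed
qed

corollary output_rule_sound:
  assumes "nested_seq (fill C D)" "nested_seq D" "\<forall>D'\<in>set Ds. nested_seq D'"
    and "IntCK (Imp (Conj (map interp Ds)) (interp D))"
    and "\<forall>D'\<in>set Ds. IntCK (interp (fill C D'))"
  shows "IntCK (interp (fill C D))"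
proof -
  have "input_seq (fill C [])" using assms(1,2) by (simp add: seq_kind_defs seq_outs_fill[of C D])
  then show ?thesis
    using IntCK.MP[OF output_context_sound[OF _ assms(2-4)] IntCK_Conj] assms(5) by auto
qed

(* The premisses Ds live in C with its output removed, like the left premiss of the left
   implication rule. *)
corollary input_rule_sound:
  assumes "nested_seq (fill C D)" "input_seq D" "\<forall>E\<in>set Es. input_seq E"
    and "\<forall>D'\<in>set Ds. nested_seq D'"
    and "IntCK (Imp (iin D) (Imp (Conj (map interp Ds)) (Disj (map iin Es))))"
    and "\<forall>D'\<in>set Ds. IntCK (interp (fill (down C) D'))" "\<forall>E\<in>set Es. IntCK (interp (fill C E))"
  shows "IntCK (interp (fill C D))"
proof -
  have "nested_seq (fill C [])" using assms(1,2) by (simp add: seq_kind_defs seq_outs_fill[of C D])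
  then show ?thesis
    using IntCK.MP[OF input_context_sound[OF _ assms(2-5)] IntCK_Conj] assms(6,7) by auto
qed

corollary input_rule_sound_same_context:
  assumes "nested_seq (fill C D)" "input_seq D" "\<forall>E\<in>set Es. input_seq E"
    and "IntCK (Imp (iin D) (Disj (map iin Es)))" and "\<forall>E\<in>set Es. IntCK (interp (fill C E))"
  shows "IntCK (interp (fill C D))"
proof (rule input_rule_sound[where Ds = "[]"])
  show "IntCK (Imp (iin D) (Imp (Conj (map interp [])) (Disj (map iin Es))))"
    using assms(4) by (simp add: IntCK_iff_from from_simps)
qed (use assms in simp_all)

lemma interp_Out_Cons: "input_seq xs \<Longrightarrow> interp (Out \<phi> # xs) = Imp (iin xs) \<phi>"
  by (subst interp_nested[of _ "Out \<phi>"]) (simp_all add: filter_input_seq, simp_all add: seq_kind_defs)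

lemma interp_In_Comp:
  "nested_seq \<Gamma> \<Longrightarrow> interp [In A, Comp \<eta> \<Gamma>] = Imp (iin [In A]) (CBox \<eta> (interp \<Gamma>))"
  by (subst interp_nested[of _ "Comp \<eta> \<Gamma>"]) (simp_all add: seq_kind_defs interp_def)

lemma interp_In_Out_imp: "IntCK (interp [In \<phi>, Out \<eta>]) \<Longrightarrow> IntCK (Imp \<phi> \<eta>)"
  by (rule IntCK_imp_trans[rotated]) (simp_all add: interp_def IntCK_iff_from from_simps)

lemma init_sound:
  assumes "nested_seq (fill C [In A, Out A])"
  shows "IntCK (interp (fill C [In A, Out A]))"
proof (rule output_rule_sound[where Ds = "[]", OF assms])
  show "IntCK (Imp (Conj (map interp [])) (interp [In A, Out A]))"
    by (simp add: interp_def IntCK_iff_from from_simps)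
qed (simp_all add: nested_seq_def)

lemma botL_sound:
  assumes "nested_seq (fill C [In Bot])"
  shows "IntCK (interp (fill C [In Bot]))"
proof (rule input_rule_sound_same_context[where Es = "[]", OF assms])
  show "IntCK (Imp (iin [In Bot]) (Disj (map iin [])))"
    by (simp add: IntCK_iff_from from_simps)
qed (simp_all add: input_seq_def)

lemma andL_sound:
  assumes "IntCK (interp (fill C [In \<phi>, In \<psi>]))" "nested_seq (fill C [In (And \<phi> \<psi>)])"
  shows "IntCK (interp (fill C [In (And \<phi> \<psi>)]))"
proof (rule input_rule_sound_same_context[where Es = "[[In \<phi>, In \<psi>]]", OF assms(2)])
  show "IntCK (Imp (iin [In (And \<phi> \<psi>)]) (Disj (map iin [[In \<phi>, In \<psi>]])))"
    by (simp add: IntCK_iff_from from_simps)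
qed (use assms(1) in \<open>simp_all add: input_seq_def\<close>)

lemma andR_sound:
  assumes "IntCK (interp (fill C [Out \<phi>]))" "IntCK (interp (fill C [Out \<psi>]))"
    and "nested_seq (fill C [Out (And \<phi> \<psi>)])"
  shows "IntCK (interp (fill C [Out (And \<phi> \<psi>)]))"
proof (rule output_rule_sound[where Ds = "[[Out \<phi>], [Out \<psi>]]", OF assms(3)])
  show "IntCK (Imp (Conj (map interp [[Out \<phi>], [Out \<psi>]])) (interp [Out (And \<phi> \<psi>)]))"
    by (simp add: interp_def IntCK_iff_from from_simps)
qed (use assms(1,2) in \<open>simp_all add: nested_seq_def\<close>)

lemma orL_sound:
  assumes "IntCK (interp (fill C [In \<phi>]))" "IntCK (interp (fill C [In \<psi>]))"
    and "nested_seq (fill C [In (Or \<phi> \<psi>)])"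
  shows "IntCK (interp (fill C [In (Or \<phi> \<psi>)]))"
proof (rule input_rule_sound_same_context[where Es = "[[In \<phi>], [In \<psi>]]", OF assms(3)])
  show "IntCK (Imp (iin [In (Or \<phi> \<psi>)]) (Disj (map iin [[In \<phi>], [In \<psi>]])))"
    by (simp add: IntCK_iff_from from_simps) (simp add: from_orI1 from_orI2 from_simps)
qed (use assms(1,2) in \<open>simp_all add: input_seq_def\<close>)

lemma orR1_sound:
  assumes "IntCK (interp (fill C [Out \<phi>]))" "nested_seq (fill C [Out (Or \<phi> \<psi>)])"
  shows "IntCK (interp (fill C [Out (Or \<phi> \<psi>)]))"
proof (rule output_rule_sound[where Ds = "[[Out \<phi>]]", OF assms(2)])
  show "IntCK (Imp (Conj (map interp [[Out \<phi>]])) (interp [Out (Or \<phi> \<psi>)]))"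
    by (simp add: interp_def IntCK_iff_from from_simps from_orI1)
qed (use assms(1) in \<open>simp_all add: nested_seq_def\<close>)

lemma orR2_sound:
  assumes "IntCK (interp (fill C [Out \<psi>]))" "nested_seq (fill C [Out (Or \<phi> \<psi>)])"
  shows "IntCK (interp (fill C [Out (Or \<phi> \<psi>)]))"
proof (rule output_rule_sound[where Ds = "[[Out \<psi>]]", OF assms(2)])
  show "IntCK (Imp (Conj (map interp [[Out \<psi>]])) (interp [Out (Or \<phi> \<psi>)]))"
    by (simp add: interp_def IntCK_iff_from from_simps from_orI2)
qed (use assms(1) in \<open>simp_all add: nested_seq_def\<close>)

lemma impL_sound:
  assumes "IntCK (interp (fill (down C) [In (Imp \<phi> \<psi>), Out \<phi>]))" "IntCK (interp (fill C [In \<psi>]))"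
    and "nested_seq (fill C [In (Imp \<phi> \<psi>)])"
  shows "IntCK (interp (fill C [In (Imp \<phi> \<psi>)]))"
proof (rule input_rule_sound[where Ds = "[[In (Imp \<phi> \<psi>), Out \<phi>]]" and Es = "[[In \<psi>]]", OF assms(3)])
  let ?G = "{And Top (Imp \<phi> \<psi>), Imp (And Top (Imp \<phi> \<psi>)) \<phi>}"
  have hyp: "?G \<turnstile> And Top (Imp \<phi> \<psi>)" by (simp add: from_hyp)
  then have "?G \<turnstile> \<phi>" by (rule from_mp[rotated]) (simp add: from_hyp)
  moreover have "?G \<turnstile> Imp \<phi> \<psi>" using hyp by (simp add: from_and_iff)
  ultimately have "?G \<turnstile> And Top \<psi>" by (meson from_mp from_and_iff from_Top)
  then show "IntCK (Imp (iin [In (Imp \<phi> \<psi>)])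
      (Imp (Conj (map interp [[In (Imp \<phi> \<psi>), Out \<phi>]])) (Disj (map iin [[In \<psi>]]))))"
    by (simp add: interp_def IntCK_imp2I)
qed (use assms(1,2) in \<open>simp_all add: seq_kind_defs\<close>)

lemma impR_sound:
  assumes "IntCK (interp (fill C [In \<phi>, Out \<psi>]))" "nested_seq (fill C [Out (Imp \<phi> \<psi>)])"
  shows "IntCK (interp (fill C [Out (Imp \<phi> \<psi>)]))"
proof (rule output_rule_sound[where Ds = "[[In \<phi>, Out \<psi>]]", OF assms(2)])
  have "insert \<phi> {Imp (And Top \<phi>) \<psi>, Top} \<turnstile> \<psi>"
    by (rule from_mp[of _ "And Top \<phi>"]) (simp_all add: from_hyp from_and_iff from_Top)
  then show "IntCK (Imp (Conj (map interp [[In \<phi>, Out \<psi>]])) (interp [Out (Imp \<phi> \<psi>)]))"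
    by (simp add: interp_def IntCK_imp2I from_Imp_iff)
qed (use assms(1) in \<open>simp_all add: nested_seq_def\<close>)

lemma boxR_sound:
  assumes "IntCK (interp (fill C [Comp \<phi> [Out \<psi>]]))" "nested_seq (fill C [Out (CBox \<phi> \<psi>)])"
  shows "IntCK (interp (fill C [Out (CBox \<phi> \<psi>)]))"
proof (rule output_rule_sound[where Ds = "[[Comp \<phi> [Out \<psi>]]]", OF assms(2)])
  have "IntCK (Imp (CBox \<phi> (Imp Top \<psi>)) (CBox \<phi> \<psi>))"
    by (rule CBox_mono) (simp add: IntCK_iff_from from_simps)
  then show "IntCK (Imp (Conj (map interp [[Comp \<phi> [Out \<psi>]]])) (interp [Out (CBox \<phi> \<psi>)]))"
    by (simp add: interp_def IntCK_iff_from from_simps from_IntCK_mp)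
qed (use assms(1) in \<open>simp_all add: nested_seq_def\<close>)

lemma diaL_sound:
  assumes "IntCK (interp (fill C [Comp \<phi> [In \<psi>]]))" "nested_seq (fill C [In (CDia \<phi> \<psi>)])"
  shows "IntCK (interp (fill C [In (CDia \<phi> \<psi>)]))"
proof (rule input_rule_sound_same_context[where Es = "[[Comp \<phi> [In \<psi>]]]", OF assms(2)])
  have "IntCK (Imp (CDia \<phi> \<psi>) (CDia \<phi> (And Top \<psi>)))"
    by (rule CDia_mono) (simp add: IntCK_iff_from from_simps)
  then show "IntCK (Imp (iin [In (CDia \<phi> \<psi>)]) (Disj (map iin [[Comp \<phi> [In \<psi>]]])))"
    by (simp add: IntCK_iff_from from_simps from_IntCK_mp)
qed (use assms(1) in \<open>simp_all add: input_seq_def\<close>)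

lemma boxL_input_local:
  assumes "IntCK (Imp \<phi> \<eta>)" "IntCK (Imp \<eta> \<phi>)"
  shows "IntCK (Imp (iin [In (CBox \<phi> \<psi>), Comp \<eta> \<Delta>]) (Disj [iin [In (CBox \<phi> \<psi>), Comp \<eta> (In \<psi> # \<Delta>)]]))"
proof -
  let ?G = "{CDia \<eta> (iin \<Delta>), CBox \<phi> \<psi>}"
  have "?G \<turnstile> CBox \<eta> \<psi>" by (rule from_IntCK_mp[OF RA_Box_imp[OF assms]]) (simp add: from_hyp)
  then have "?G \<turnstile> CDia \<eta> (And (iin \<Delta>) \<psi>)"
    by (rule from_IntCK_mp[OF CW from_andI[rotated]]) (simp add: from_hyp)
  then show ?thesis by (simp add: IntCK_iff_from from_simps)
qed

lemma boxL_output_local: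
  assumes "IntCK (Imp \<phi> \<eta>)" "IntCK (Imp \<eta> \<phi>)" "nested_seq \<Delta>"
  shows "IntCK (Imp (interp [In (CBox \<phi> \<psi>), Comp \<eta> (In \<psi> # \<Delta>)]) (interp [In (CBox \<phi> \<psi>), Comp \<eta> \<Delta>]))"
proof -
  let ?I = "interp (In \<psi> # \<Delta>)"
  have prefix: "IntCK (Imp ?I (Imp (iin [In \<psi>]) (interp \<Delta>)))"
    using interp_input_prefix(1)[of "[In \<psi>]" \<Delta>] assms(3) by (simp add: input_seq_def)
  have "IntCK (Imp (Conj [\<psi>, ?I]) (interp \<Delta>))"
    by (rule IntCK_impI, rule from_IntCK_mp2[OF prefix]) (simp_all add: from_simps)
  then have box: "IntCK (Imp (And (CBox \<eta> \<psi>) (CBox \<eta> ?I)) (CBox \<eta> (interp \<Delta>)))"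
    using Conj_box_lift by fastforce
  let ?G = "{Imp (iin [In (CBox \<phi> \<psi>)]) (CBox \<eta> ?I), iin [In (CBox \<phi> \<psi>)]}"
  have X: "?G \<turnstile> iin [In (CBox \<phi> \<psi>)]" by (simp add: from_hyp)
  then have "?G \<turnstile> CBox \<eta> \<psi>" by (simp add: from_and_iff from_IntCK_mp[OF RA_Box_imp[OF assms(1,2)]])
  moreover have "?G \<turnstile> CBox \<eta> ?I" by (rule from_mp[OF _ X]) (simp add: from_hyp)
  ultimately have "?G \<turnstile> CBox \<eta> (interp \<Delta>)" by (rule from_IntCK_mp[OF box from_andI])
  moreover have "nested_seq (In \<psi> # \<Delta>)" using assms(3) by (simp add: nested_seq_def)
  ultimately show ?thesis using assms(3) by (simp add: interp_In_Comp IntCK_imp2I)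
qed

lemma boxL_sound:
  assumes "IntCK (interp [In \<phi>, Out \<eta>])" "IntCK (interp [In \<eta>, Out \<phi>])"
    and "IntCK (interp (fill C [In (CBox \<phi> \<psi>), Comp \<eta> (In \<psi> # \<Delta>)]))"
    and "nested_seq (fill C [In (CBox \<phi> \<psi>), Comp \<eta> \<Delta>])"
  shows "IntCK (interp (fill C [In (CBox \<phi> \<psi>), Comp \<eta> \<Delta>]))"
proof -
  have equiv: "IntCK (Imp \<phi> \<eta>)" "IntCK (Imp \<eta> \<phi>)" using assms(1,2) by (simp_all add: interp_In_Out_imp)
  have "nested_seq \<Delta> \<or> input_seq \<Delta>"
    using nested_fill_cases[OF assms(4)] by (auto simp: seq_kind_defs)
  then show ?thesis
  proof
    assume "nested_seq \<Delta>"
    then show ?thesis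
      using assms(3,4) boxL_output_local[OF equiv]
      by (intro output_rule_sound[where Ds = "[[In (CBox \<phi> \<psi>), Comp \<eta> (In \<psi> # \<Delta>)]]"])
        (simp_all add: nested_seq_def)
  next
    assume "input_seq \<Delta>"
    then show ?thesis
      using assms(3,4) boxL_input_local[OF equiv]
      by (intro input_rule_sound_same_context[where Es = "[[In (CBox \<phi> \<psi>), Comp \<eta> (In \<psi> # \<Delta>)]]"])
        (simp_all add: input_seq_def)
  qed
qed

lemma diaR_local:
  assumes "IntCK (Imp \<phi> \<eta>)" "IntCK (Imp \<eta> \<phi>)" "input_seq \<Delta>"
  shows "IntCK (Imp (Conj [interp [Comp \<eta> (Out \<psi> # \<Delta>)]]) (interp [Out (CDia \<phi> \<psi>), Comp \<eta> \<Delta>]))"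
proof -
  have mp: "IntCK (Imp (And (iin \<Delta>) (Imp (iin \<Delta>) \<psi>)) \<psi>)"
    by (simp add: IntCK_iff_from from_simps) (rule from_mp[of _ "iin \<Delta>"], simp_all add: from_hyp)
  let ?G = "{Imp Top (CBox \<eta> (Imp (iin \<Delta>) \<psi>)), And Top (CDia \<eta> (iin \<Delta>))}"
  have "?G \<turnstile> And Top (CDia \<eta> (iin \<Delta>))" by (simp add: from_hyp)
  then have "?G \<turnstile> CBox \<eta> (Imp (iin \<Delta>) \<psi>)" and "?G \<turnstile> CDia \<eta> (iin \<Delta>)"
    by (simp_all add: from_hyp_Imp_Top from_and_iff)
  then have "?G \<turnstile> CDia \<eta> (And (iin \<Delta>) (Imp (iin \<Delta>) \<psi>))" by (rule from_IntCK_mp[OF CW from_andI[rotated]])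
  then have "?G \<turnstile> CDia \<phi> \<psi>" by (rule from_IntCK_mp[OF RA_Dia_imp[OF assms(1,2)] from_IntCK_mp[OF CDia_mono[OF mp]]])
  moreover have "nested_seq (Out \<psi> # \<Delta>)" "input_seq [Comp \<eta> \<Delta>]"
    using assms(3) by (simp_all add: seq_kind_defs)
  ultimately show ?thesis
    using interp_Comp_Cons[of "[]" "Out \<psi> # \<Delta>" \<eta>] assms(3)
    by (simp add: interp_Out_Cons IntCK_imp2I input_seq_def)
qed

lemma diaR_sound:
  assumes "IntCK (interp [In \<phi>, Out \<eta>])" "IntCK (interp [In \<eta>, Out \<phi>])"
    and "IntCK (interp (fill C [Comp \<eta> (Out \<psi> # \<Delta>)]))"
    and "nested_seq (fill C [Out (CDia \<phi> \<psi>), Comp \<eta> \<Delta>])"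
  shows "IntCK (interp (fill C [Out (CDia \<phi> \<psi>), Comp \<eta> \<Delta>]))"
proof -
  have equiv: "IntCK (Imp \<phi> \<eta>)" "IntCK (Imp \<eta> \<phi>)" using assms(1,2) by (simp_all add: interp_In_Out_imp)
  have "input_seq \<Delta>"
    using nested_fill_cases[OF assms(4)] by (auto simp: seq_kind_defs)
  then show ?thesis
    using assms(3,4) diaR_local[OF equiv]
    by (intro output_rule_sound[where Ds = "[[Comp \<eta> (Out \<psi> # \<Delta>)]]"]) (simp_all add: seq_kind_defs)
qed

lemma exch_sound:
  assumes "IntCK (interp (fill C xs))" "mset xs = mset ys" "nested_seq (fill C ys)"
  shows "IntCK (interp (fill C ys))"
proof -
  have "set xs = set ys" using assms(2) by (rule mset_eq_setD)
  moreover have "seq_outs xs = seq_outs ys" using assms(2) by (rule seq_outs_mset)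
  ultimately show ?thesis
    using nested_fill_cases[OF assms(3)]
  proof (elim disjE conjE)
    assume "nested_seq ys" "seq_outs xs = seq_outs ys" "set xs = set ys"
    moreover from this have "nested_seq xs" by (simp add: nested_seq_def)
    ultimately show ?thesis
      using assms(1,3) by (intro output_rule_sound[where Ds = "[xs]"]) (simp_all add: interp_mono_set)
  next
    assume "input_seq ys" "seq_outs xs = seq_outs ys" "set xs = set ys"
    moreover from this have "input_seq xs" by (simp add: input_seq_def)
    ultimately show ?thesis
      using assms(1,3)
      by (intro input_rule_sound_same_context[where Es = "[xs]"]) (simp_all add: iin_mono_set)
  qed
qed

theorem derivable_sound: "derivable \<Gamma> \<Longrightarrow> IntCK (interp \<Gamma>)"
proof (induction rule: derivable.induct)
  case exch
  then show ?case by (blast intro: exch_sound)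
qed (simp_all add: init_sound botL_sound andL_sound andR_sound orL_sound orR1_sound orR2_sound
  impL_sound impR_sound boxL_sound boxR_sound diaL_sound diaR_sound)

theorem theorem1:
  assumes "nested_seq \<Gamma>"
    and "derivable \<Gamma>"
  shows "IntCK (interp \<Gamma>)"
  using derivable_sound[OF assms(2)] .

end
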